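(* Let $\kappa$ be a regular uncountable cardinal with $\kappa^{<\kappa}=\kappa$ and $\gamma^\omega<\kappa$ for all $\gamma<\kappa$, and suppose $\kappa=\lambda^+$. Then the linear order $I$ described in the context is $(<\kappa,bs)$-stable.
   Context: $I^0$: order $\kappa\times\mathbb Q$ lexicographically; $I^0$ is the set of $f:\omega\to\kappa\times\mathbb Q$, $f(n)=(f_1(n),f_2(n))$, with $\{n\mid f_1(n)\ne0\}$ finite, ordered by comparing at the least $n$ where they differ. Construct linear orders $I^0\subseteq I^1\subseteq\dots$ ($i<\kappa$): given $I^i$, for each $\nu\in I^i$ add a new element $\nu^{i+1}$ with $\nu^{i+1}<\nu$ and, for all $\tau\in I^i\setminus\{\nu\}$, $\tau<\nu^{i+1}$ iff $\tau<\nu$ (for distinct $\nu,\mu$, $\nu^{i+1}<\mu^{i+1}$ iff $\nu<\mu$); $I^{i+1}=I^i\cup\{\nu^{i+1}\mid\nu\in I^i\}$; unions at limits; $I=\bigcup_{i<\kappa}I^i$. For a linear order $A$, $tp_{bs}(a,B,A)$ is the set of atomic and negated atomic formulas with parameters from $B$ satisfied by $a$; $A$ is $(<\kappa,bs)$-stable if for every $B\subseteq A$ with $|B|<\kappa$, $|\{tp_{bs}(a,B,A)\mid a\in A\}|<\kappa$. *)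

theory Defs
  imports Complex_Main
begin

definition kzero :: "'k rel \<Rightarrow> 'k" where
  "kzero k = (THE z. z \<in> Field k \<and> (\<forall>x\<in>Field k. (z, x) \<in> k))"

definition ksucc :: "'k rel \<Rightarrow> 'k \<Rightarrow> 'k" where
  "ksucc k i = (THE j. j \<in> aboveS k i \<and> (\<forall>x\<in>aboveS k i. (j, x) \<in> k))"

definition klimit :: "'k rel \<Rightarrow> 'k \<Rightarrow> bool" where
  "klimit k j \<longleftrightarrow> j \<in> Field k \<and> j \<noteq> kzero k \<and> (\<forall>i\<in>Field k. j \<noteq> ksucc k i)"

definition I0_set :: "'k rel \<Rightarrow> (nat \<Rightarrow> 'k \<times> rat) set" where
  "I0_set k = {f. (\<forall>n. fst (f n) \<in> Field k) \<and> finite {n. fst (f n) \<noteq> kzero k}}"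

definition pair_less :: "'k rel \<Rightarrow> 'k \<times> rat \<Rightarrow> 'k \<times> rat \<Rightarrow> bool" where
  "pair_less k p q \<longleftrightarrow>
     (fst p \<noteq> fst q \<and> (fst p, fst q) \<in> k) \<or> (fst p = fst q \<and> snd p < snd q)"

definition I0_less :: "'k rel \<Rightarrow> (nat \<Rightarrow> 'k \<times> rat) \<Rightarrow> (nat \<Rightarrow> 'k \<times> rat) \<Rightarrow> bool" where
  "I0_less k f g \<longleftrightarrow> f \<noteq> g \<and>
     pair_less k (f (LEAST n. f n \<noteq> g n)) (g (LEAST n. f n \<noteq> g n))"

text \<open>is_I_construction k L St nu emb I: L is a strict linear order on I; St i is the
  stage I^i (i an ordinal below kappa, i.e. i in Field k); emb identifies I^0 with St 0
  order-isomorphically; nu i \<nu> is the new element \<nu>^(i+1) added at stage i+1.\<close>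

definition is_I_construction ::
  "'k rel \<Rightarrow> 'x rel \<Rightarrow> ('k \<Rightarrow> 'x set) \<Rightarrow> ('k \<Rightarrow> 'x \<Rightarrow> 'x)
     \<Rightarrow> ((nat \<Rightarrow> 'k \<times> rat) \<Rightarrow> 'x) \<Rightarrow> 'x set \<Rightarrow> bool" where
  "is_I_construction k L St nu emb I \<longleftrightarrow>
     strict_linear_order_on I L \<and>
     inj_on emb (I0_set k) \<and>
     St (kzero k) = emb ` I0_set k \<and>
     (\<forall>f\<in>I0_set k. \<forall>g\<in>I0_set k. (emb f, emb g) \<in> L \<longleftrightarrow> I0_less k f g) \<and>
     (\<forall>i\<in>Field k.
        St (ksucc k i) = St i \<union> nu i ` St i \<and>
        inj_on (nu i) (St i) \<and>
        nu i ` St i \<inter> St i = {} \<and>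
        (\<forall>\<nu>\<in>St i.
           (nu i \<nu>, \<nu>) \<in> L \<and>
           (\<forall>\<tau>\<in>St i - {\<nu>}. (\<tau>, nu i \<nu>) \<in> L \<longleftrightarrow> (\<tau>, \<nu>) \<in> L) \<and>
           (\<forall>\<mu>\<in>St i - {\<nu>}. (nu i \<nu>, nu i \<mu>) \<in> L \<longleftrightarrow> (\<nu>, \<mu>) \<in> L))) \<and>
     (\<forall>j. klimit k j \<longrightarrow> St j = (\<Union>i\<in>underS k j. St i)) \<and>
     I = (\<Union>i\<in>Field k. St i)"

section \<open>Basic (quantifier-free) types in the language of linear orders\<close>

datatype 'a tm = Var | Par 'a
datatype 'a atom = Lt "'a tm" "'a tm" | Eq "'a tm" "'a tm"
datatype 'a lit = Pos "'a atom" | Neg "'a atom"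

fun tm_val :: "'a \<Rightarrow> 'a tm \<Rightarrow> 'a" where
  "tm_val a Var = a"
| "tm_val a (Par b) = b"

fun tm_pars :: "'a tm \<Rightarrow> 'a set" where
  "tm_pars Var = {}"
| "tm_pars (Par b) = {b}"

fun atom_sat :: "'a rel \<Rightarrow> 'a \<Rightarrow> 'a atom \<Rightarrow> bool" where
  "atom_sat L a (Lt s t) \<longleftrightarrow> (tm_val a s, tm_val a t) \<in> L"
| "atom_sat L a (Eq s t) \<longleftrightarrow> tm_val a s = tm_val a t"

fun atom_pars :: "'a atom \<Rightarrow> 'a set" where
  "atom_pars (Lt s t) = tm_pars s \<union> tm_pars t"
| "atom_pars (Eq s t) = tm_pars s \<union> tm_pars t"

fun lit_sat :: "'a rel \<Rightarrow> 'a \<Rightarrow> 'a lit \<Rightarrow> bool" where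
  "lit_sat L a (Pos \<phi>) \<longleftrightarrow> atom_sat L a \<phi>"
| "lit_sat L a (Neg \<phi>) \<longleftrightarrow> \<not> atom_sat L a \<phi>"

fun lit_pars :: "'a lit \<Rightarrow> 'a set" where
  "lit_pars (Pos \<phi>) = atom_pars \<phi>"
| "lit_pars (Neg \<phi>) = atom_pars \<phi>"

definition tp_bs :: "'a rel \<Rightarrow> 'a \<Rightarrow> 'a set \<Rightarrow> 'a lit set" where
  "tp_bs L a B = {\<phi>. lit_pars \<phi> \<subseteq> B \<and> lit_sat L a \<phi>}"

definition bs_stable :: "'k rel \<Rightarrow> 'a set \<Rightarrow> 'a rel \<Rightarrow> bool" where
  "bs_stable k A L \<longleftrightarrow>
     (\<forall>B. B \<subseteq> A \<and> ordLess2 (card_of B) k \<longrightarrow>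
          ordLess2 (card_of {tp_bs L a B | a. a \<in> A}) k)"

end

theory Submission
  imports Defs "HOL-Library.Countable"
begin

text \<open>
  The points \<open>\<nu>^(i+1)\<close> make \<open>I\<close> a forest with roots \<open>I^0\<close>, in which the children of \<open>\<nu>\<close> lie
  below \<open>\<nu>\<close> and increase with their stage, and the descendants of every point form a convex set.
  Fix a small set \<open>B\<close>, i.e. one of size \<open>< \<kappa>\<close>; the type of a point outside \<open>B\<close> is
  determined by its cut in \<open>B\<close>. The set \<open>A\<close> of ancestors of points of \<open>B\<close> is small too, since
  every point has countably many ancestors. A point outside
  \<open>A\<close> has the cut of its highest ancestor \<open>y\<close> outside \<open>A\<close>. If \<open>y\<close> is a root, its cut is
  read off from its cut in the roots of \<open>B\<close>, and \<open>I^0\<close> has fewer than \<open>\<kappa>\<close> cuts over a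
  small set because \<open>\<gamma>\<^sup>\<omega> < \<kappa>\<close>. Otherwise \<open>y = \<nu>^(i+1)\<close> with \<open>\<nu> \<in> A\<close>, and the cut of
  \<open>y\<close> depends only on \<open>\<nu>\<close> and on the final segment above \<open>i\<close> of the stages of the
  children of \<open>\<nu>\<close> in \<open>A\<close>. Regularity of \<open>\<kappa>\<close> keeps all these counts below \<open>\<kappa>\<close>.
\<close>

unbundle cardinal_syntax

lemma card_of_subset_ordLess: "A \<subseteq> B \<Longrightarrow> |B| <o r \<Longrightarrow> |A| <o r"
  using card_of_mono1 ordLeq_ordLess_trans by blast

lemma card_of_image_ordLess: "|A| <o r \<Longrightarrow> |f ` A| <o r"
  using card_of_image ordLeq_ordLess_trans by blast

lemma card_of_image_factor:
  assumes "\<And>a a'. a \<in> X \<Longrightarrow> a' \<in> X \<Longrightarrow> h a = h a' \<Longrightarrow> t a = t a'"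
  shows "|t ` X| \<le>o |h ` X|"
proof -
  have "t ` X = (t \<circ> inv_into X h) ` h ` X"
    unfolding image_comp
  proof (rule image_cong[OF refl])
    fix x assume "x \<in> X"
    then have "inv_into X h (h x) \<in> X" "h (inv_into X h (h x)) = h x"
      by (auto intro: inv_into_into f_inv_into_f)
    then show "t x = (t \<circ> inv_into X h \<circ> h) x"
      using assms[OF \<open>x \<in> X\<close>] by simp
  qed
  then show ?thesis
    by (metis card_of_image)
qed

lemma ordinal_cases [case_names zero succ limit]:
  assumes "j \<in> Field k"
  obtains "j = kzero k" | i where "i \<in> Field k" "j = ksucc k i" | "klimit k j"
  using assms unfolding klimit_def by blast

context wo_rel
begin

lemma kzero_eq_minim: "kzero r = minim (Field r)"
  unfolding kzero_def minim_def isMinim_def by simp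

lemma ksucc_eq_minim: "ksucc r i = minim (aboveS i)"
  unfolding ksucc_def minim_def isMinim_def by simp

lemma aboveS_subset_Field: "aboveS i \<subseteq> Field r"
  unfolding aboveS_def Field_def by blast

lemma kzero_least: "x \<in> Field r \<Longrightarrow> (kzero r, x) \<in> r"
  unfolding kzero_eq_minim by (rule minim_least) auto

lemma kzero_in_Field: "Field r \<noteq> {} \<Longrightarrow> kzero r \<in> Field r"
  unfolding kzero_eq_minim by (rule minim_inField) auto

lemma ksucc_in_aboveS: "aboveS i \<noteq> {} \<Longrightarrow> ksucc r i \<in> aboveS i"
  unfolding ksucc_eq_minim by (rule minim_in[OF aboveS_subset_Field])

lemma ksucc_least: "j \<in> aboveS i \<Longrightarrow> (ksucc r i, j) \<in> r"
  unfolding ksucc_eq_minim by (rule minim_least[OF aboveS_subset_Field])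

lemma below_ksucc:
  assumes "i \<in> Field r" "(j, ksucc r i) \<in> r" "j \<noteq> ksucc r i"
  shows "(j, i) \<in> r"
proof (rule ccontr)
  assume "(j, i) \<notin> r"
  moreover have "j \<in> Field r"
    using assms(2) by (rule FieldI1)
  ultimately have "j \<in> aboveS i"
    using assms(1) TOTALS REFL unfolding aboveS_def refl_on_def by blast
  then show False
    using ksucc_least assms(2,3) ANTISYM unfolding antisym_def by blast
qed

lemma upper_segment_cases:
  assumes "V \<subseteq> Field r"
  shows "{\<beta>\<in>V. (\<alpha>, \<beta>) \<in> r} \<in> insert {} ((\<lambda>\<gamma>. {\<beta>\<in>V. (\<gamma>, \<beta>) \<in> r}) ` V)"
proof (cases "{\<beta>\<in>V. (\<alpha>, \<beta>) \<in> r} = {}")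
  case False
  define \<gamma> where "\<gamma> = minim {\<beta>\<in>V. (\<alpha>, \<beta>) \<in> r}"
  have sub: "{\<beta>\<in>V. (\<alpha>, \<beta>) \<in> r} \<subseteq> Field r"
    using assms by blast
  have \<gamma>: "\<gamma> \<in> V" "(\<alpha>, \<gamma>) \<in> r"
    using minim_in[OF sub False] unfolding \<gamma>_def by auto
  have "{\<beta>\<in>V. (\<alpha>, \<beta>) \<in> r} = {\<beta>\<in>V. (\<gamma>, \<beta>) \<in> r}"
    using \<gamma>(2) minim_least[OF sub] TRANS unfolding \<gamma>_def trans_def by blast
  then show ?thesis
    using \<gamma>(1) by blast
qed simp

end

lemma tp_bs_eq_if_same_upper_cut:
  assumes L: "strict_linear_order_on A L" and "B \<subseteq> A" "a \<in> A - B" "a' \<in> A - B"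
    and cut: "{b\<in>B. (a, b) \<in> L} = {b\<in>B. (a', b) \<in> L}"
  shows "tp_bs L a B = tp_bs L a' B"
proof -
  have irrefl: "(c, c) \<notin> L" for c
    using L unfolding strict_linear_order_on_def irrefl_def by blast
  have flip: "(b, c) \<in> L \<longleftrightarrow> (c, b) \<notin> L" if "b \<in> A" "c \<in> A" "b \<noteq> c" for b c
    using L that unfolding strict_linear_order_on_def total_on_def irrefl_def trans_def by blast
  have less: "(a, b) \<in> L \<longleftrightarrow> (a', b) \<in> L" if "b \<in> B" for b
    using cut that by blast
  have greater: "(b, a) \<in> L \<longleftrightarrow> (b, a') \<in> L" if "b \<in> B" for b
    using flip[of b a] flip[of b a'] less[OF that] assms(2-4) that by blast
  have "atom_sat L a \<phi> \<longleftrightarrow> atom_sat L a' \<phi>" if "atom_pars \<phi> \<subseteq> B" for \<phi>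
  proof (cases \<phi>)
    case (Lt s t)
    then show ?thesis
      using that less greater irrefl by (cases s; cases t) auto
  next
    case (Eq s t)
    then show ?thesis
      using that assms(3,4) by (cases s; cases t) auto
  qed
  then have "lit_sat L a \<phi> \<longleftrightarrow> lit_sat L a' \<phi>" if "lit_pars \<phi> \<subseteq> B" for \<phi>
    using that by (cases \<phi>) auto
  then show ?thesis
    unfolding tp_bs_def by blast
qed

lemma I0_less_cong:
  assumes "\<And>n. f n = g n \<longleftrightarrow> f' n = g n"
    and "\<And>n. pair_less k (f n) (g n) \<longleftrightarrow> pair_less k (f' n) (g n)"
  shows "I0_less k f g \<longleftrightarrow> I0_less k f' g"
proof -
  have least: "(LEAST n. f n \<noteq> g n) = (LEAST n. f' n \<noteq> g n)"
    using assms(1) by simp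
  have "f = g \<longleftrightarrow> f' = g"
    using assms(1) by (simp add: fun_eq_iff)
  then show ?thesis
    unfolding I0_less_def least using assms(2) by simp
qed

locale uncountable_regular_card =
  fixes k :: "'k rel"
  assumes card: "Card_order k"
    and regular: "regularCard k"
    and uncountable: "natLeq <o k"
begin

lemma ordLess_imp_ordLeq_Field: "r <o k \<Longrightarrow> r \<le>o |Field k|"
  using ordLess_ordIso_trans[OF _ ordIso_symmetric[OF card_of_Field_ordIso[OF card]]]
  by (rule ordLess_imp_ordLeq)

lemma infinite_Field: "infinite (Field k)"
  using ordLess_imp_ordLeq_Field[OF uncountable] infinite_iff_natLeq_ordLeq by blast

lemma wo_rel_k: "wo_rel k"
  using card card_order_on_well_order_on wo_rel_def by blast

lemma finite_small: "finite A \<Longrightarrow> |A| <o k"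
  using finite_iff_ordLess_natLeq uncountable ordLess_transitive by blast

lemma nat_small: "|UNIV :: nat set| <o k"
  using card_of_nat uncountable ordIso_ordLess_trans by blast

lemma rat_small: "|UNIV :: rat set| <o k"
  using card_of_ordLeq[of "UNIV :: rat set" "UNIV :: nat set"] inj_to_nat nat_small
    ordLeq_ordLess_trans by blast

lemma small_Un: "|A| <o k \<Longrightarrow> |B| <o k \<Longrightarrow> |A \<union> B| <o k"
  using card_of_Un_ordLess_infinite_Field[OF infinite_Field card] by blast

lemma small_UN: "|A| <o k \<Longrightarrow> (\<And>a. a \<in> A \<Longrightarrow> |F a| <o k) \<Longrightarrow> |\<Union>a\<in>A. F a| <o k"
  using stable_UNION[OF regularCard_stable[OF card infinite_Field regular]] by blast

lemma small_Sigma: "|A| <o k \<Longrightarrow> (\<And>a. a \<in> A \<Longrightarrow> |F a| <o k) \<Longrightarrow> |Sigma A F| <o k"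
  using stable_elim[OF regularCard_stable[OF card infinite_Field regular]] by blast

lemma small_upper_segments:
  assumes "V \<subseteq> Field k" and "|V| <o k"
  shows "|(\<lambda>\<alpha>. {\<beta>\<in>V. (\<alpha>, \<beta>) \<in> k}) ` X| <o k"
proof -
  have "|insert {} ((\<lambda>\<gamma>. {\<beta>\<in>V. (\<gamma>, \<beta>) \<in> k}) ` V)| <o k"
    using small_Un[OF finite_small[of "{{}}"] card_of_image_ordLess[OF assms(2)]] by simp
  then show ?thesis
    by (rule card_of_subset_ordLess[rotated]) (use wo_rel.upper_segment_cases[OF wo_rel_k assms(1)] in blast)
qed

end

locale small_countable_powers = uncountable_regular_card k for k :: "'k rel" +
  assumes gamma_omega: "\<forall>A. A \<subseteq> Field k \<and> |A| <o k \<longrightarrow> |Func (UNIV :: nat set) A| <o k"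
begin

lemma small_sequences:
  assumes "|W| <o k"
  shows "|{h :: nat \<Rightarrow> 'a. range h \<subseteq> W}| <o k"
proof -
  obtain e where e: "inj_on e W" "e ` W \<subseteq> Field k"
    using ordLess_imp_ordLeq_Field[OF assms] unfolding card_of_ordLeq[symmetric] by blast
  have "inj_on ((\<circ>) e) {h :: nat \<Rightarrow> 'a. range h \<subseteq> W}"
    using e(1) by (auto simp: inj_on_def fun_eq_iff image_subset_iff)
  moreover have "(\<circ>) e ` {h :: nat \<Rightarrow> 'a. range h \<subseteq> W} \<subseteq> Func UNIV (e ` W)"
    unfolding Func_def by (auto intro!: imageI simp: image_subset_iff)
  ultimately have "|{h :: nat \<Rightarrow> 'a. range h \<subseteq> W}| \<le>o |Func (UNIV :: nat set) (e ` W)|"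
    unfolding card_of_ordLeq[symmetric] by blast
  moreover have "|Func (UNIV :: nat set) (e ` W)| <o k"
    using gamma_omega e(2) card_of_image_ordLess[OF assms] by blast
  ultimately show ?thesis
    using ordLeq_ordLess_trans by blast
qed

text \<open>A point \<open>(\<alpha>, q)\<close> of \<open>\<kappa> \<times> \<rat>\<close> meets the coordinates of \<open>R0\<close> only through \<open>\<alpha>\<close> when
  \<open>\<alpha>\<close> is one of their first coordinates \<open>V1\<close>, and otherwise only through the final segment of
  \<open>V1\<close> above \<open>\<alpha>\<close>. Hence the cut of \<open>f\<close> in \<open>R0\<close> depends only on a sequence in a small set.\<close>
lemma small_I0_cuts:
  assumes R0: "R0 \<subseteq> I0_set k" "|R0| <o k"
  shows "|(\<lambda>f. {g\<in>R0. I0_less k f g}) ` X| <o k"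
proof -
  define V where "V = (\<Union>g\<in>R0. range g)"
  define V1 where "V1 = fst ` V"
  define seg where "seg \<alpha> = {\<beta>\<in>V1. (\<alpha>, \<beta>) \<in> k}" for \<alpha>
  define proj :: "'k \<times> rat \<Rightarrow> 'k \<times> rat + 'k set"
    where "proj p = (if fst p \<in> V1 then Inl p else Inr (seg (fst p)))" for p
  have V_small: "|V| <o k"
    unfolding V_def by (rule small_UN[OF R0(2)]) (rule card_of_image_ordLess[OF nat_small])
  have V1_Field: "V1 \<subseteq> Field k"
    using R0(1) unfolding V1_def V_def I0_set_def by auto
  have V1_small: "|V1| <o k"
    unfolding V1_def using card_of_image_ordLess[OF V_small] .
  have proj_cong: "(p = q \<longleftrightarrow> p' = q) \<and> (pair_less k p q \<longleftrightarrow> pair_less k p' q)"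
    if "proj p = proj p'" "q \<in> V" for p p' q
    using that unfolding proj_def seg_def pair_less_def V1_def
    by (auto split: if_splits)
  have cuts_eq: "{g\<in>R0. I0_less k f g} = {g\<in>R0. I0_less k f' g}"
    if "proj \<circ> f = proj \<circ> f'" for f f'
  proof -
    have "I0_less k f g \<longleftrightarrow> I0_less k f' g" if "g \<in> R0" for g
    proof -
      have same: "(f n = g n \<longleftrightarrow> f' n = g n) \<and> (pair_less k (f n) (g n) \<longleftrightarrow> pair_less k (f' n) (g n))" for n
        by (rule proj_cong) (use \<open>proj \<circ> f = proj \<circ> f'\<close> \<open>g \<in> R0\<close> in \<open>auto simp: fun_eq_iff V_def\<close>)
      show ?thesis
        by (rule I0_less_cong) (use same in blast)+
    qed
    then show ?thesis by blast
  qed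
  define W where "W = Inl ` (V1 \<times> (UNIV :: rat set)) \<union> Inr ` range seg"
  have "range proj \<subseteq> W"
    unfolding W_def proj_def by (auto simp: mem_Times_iff)
  then have "(\<lambda>f. proj \<circ> f) ` X \<subseteq> {h. range h \<subseteq> W}"
    by auto
  moreover have "|W| <o k"
    unfolding W_def seg_def
    by (intro small_Un card_of_image_ordLess small_Sigma V1_small rat_small
        small_upper_segments V1_Field)
  ultimately have "|(\<lambda>f. proj \<circ> f) ` X| <o k"
    using card_of_subset_ordLess small_sequences by blast
  moreover have "|(\<lambda>f. {g\<in>R0. I0_less k f g}) ` X| \<le>o |(\<lambda>f. proj \<circ> f) ` X|"
    by (rule card_of_image_factor) (use cuts_eq in blast)
  ultimately show ?thesis
    using ordLeq_ordLess_trans by blast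
qed

end

locale I_construction =
  fixes k :: "'k rel" and L :: "'x rel" and St :: "'k \<Rightarrow> 'x set" and nu :: "'k \<Rightarrow> 'x \<Rightarrow> 'x"
    and emb :: "(nat \<Rightarrow> 'k \<times> rat) \<Rightarrow> 'x" and I :: "'x set"
  assumes well_order: "Well_order k"
    and Field_nonempty: "Field k \<noteq> {}"
    and no_max: "\<And>i. i \<in> Field k \<Longrightarrow> aboveS k i \<noteq> {}"
    and constr: "is_I_construction k L St nu emb I"
begin

sublocale k: wo_rel k
  using well_order by (simp add: wo_rel_def)

lemma L_strict_linear: "strict_linear_order_on I L"
  using constr unfolding is_I_construction_def by (elim conjE) assumption

lemma L_trans: "(a, b) \<in> L \<Longrightarrow> (b, c) \<in> L \<Longrightarrow> (a, c) \<in> L"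
  using L_strict_linear unfolding strict_linear_order_on_def trans_def by blast

lemma L_irrefl: "(a, a) \<notin> L"
  using L_strict_linear unfolding strict_linear_order_on_def irrefl_def by blast

lemma L_asym: "(a, b) \<in> L \<Longrightarrow> (b, a) \<notin> L"
  using L_trans L_irrefl by blast

lemma L_flip: "a \<in> I \<Longrightarrow> b \<in> I \<Longrightarrow> a \<noteq> b \<Longrightarrow> (a, b) \<in> L \<longleftrightarrow> (b, a) \<notin> L"
  using L_strict_linear L_asym unfolding strict_linear_order_on_def total_on_def by blast

lemma St_kzero: "St (kzero k) = emb ` I0_set k"
  using constr unfolding is_I_construction_def by (elim conjE) assumption

lemma emb_inj: "inj_on emb (I0_set k)"
  using constr unfolding is_I_construction_def by (elim conjE) assumption

lemma emb_less_iff: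
  assumes "f \<in> I0_set k" "g \<in> I0_set k"
  shows "(emb f, emb g) \<in> L \<longleftrightarrow> I0_less k f g"
proof -
  have "\<forall>f\<in>I0_set k. \<forall>g\<in>I0_set k. (emb f, emb g) \<in> L \<longleftrightarrow> I0_less k f g"
    using constr unfolding is_I_construction_def by (elim conjE) assumption
  then show ?thesis
    using assms by blast
qed

lemma St_limit: "klimit k j \<Longrightarrow> St j = (\<Union>i\<in>underS k j. St i)"
  using constr unfolding is_I_construction_def by (elim conjE) metis

lemma I_eq: "I = (\<Union>i\<in>Field k. St i)"
  using constr unfolding is_I_construction_def by (elim conjE) assumption

lemma construction_step:
  assumes "i \<in> Field k"
  shows "St (ksucc k i) = St i \<union> nu i ` St i \<and> inj_on (nu i) (St i) \<and> nu i ` St i \<inter> St i = {} \<and>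
    (\<forall>\<nu>\<in>St i. (nu i \<nu>, \<nu>) \<in> L \<and>
       (\<forall>\<tau>\<in>St i - {\<nu>}. (\<tau>, nu i \<nu>) \<in> L \<longleftrightarrow> (\<tau>, \<nu>) \<in> L) \<and>
       (\<forall>\<mu>\<in>St i - {\<nu>}. (nu i \<nu>, nu i \<mu>) \<in> L \<longleftrightarrow> (\<nu>, \<mu>) \<in> L))"
  using constr assms unfolding is_I_construction_def by (elim conjE) (rule bspec)

lemma St_ksucc: "i \<in> Field k \<Longrightarrow> St (ksucc k i) = St i \<union> nu i ` St i"
  using construction_step by blast

lemma nu_inj_on: "i \<in> Field k \<Longrightarrow> inj_on (nu i) (St i)"
  using construction_step by blast

lemma nu_notin_St: "i \<in> Field k \<Longrightarrow> \<nu> \<in> St i \<Longrightarrow> nu i \<nu> \<notin> St i"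
  using construction_step by blast

lemma nu_less: "i \<in> Field k \<Longrightarrow> \<nu> \<in> St i \<Longrightarrow> (nu i \<nu>, \<nu>) \<in> L"
  using construction_step by blast

lemma less_nu_iff:
  "i \<in> Field k \<Longrightarrow> \<nu> \<in> St i \<Longrightarrow> \<tau> \<in> St i \<Longrightarrow> \<tau> \<noteq> \<nu> \<Longrightarrow> (\<tau>, nu i \<nu>) \<in> L \<longleftrightarrow> (\<tau>, \<nu>) \<in> L"
  using construction_step by blast

lemma nu_less_nu_iff:
  "i \<in> Field k \<Longrightarrow> \<nu> \<in> St i \<Longrightarrow> \<mu> \<in> St i \<Longrightarrow> \<mu> \<noteq> \<nu> \<Longrightarrow>
    (nu i \<nu>, nu i \<mu>) \<in> L \<longleftrightarrow> (\<nu>, \<mu>) \<in> L"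
  using construction_step by blast

lemma St_subset_I: "i \<in> Field k \<Longrightarrow> St i \<subseteq> I"
  using I_eq by blast

lemma kzero_in_Field: "kzero k \<in> Field k"
  using k.kzero_in_Field[OF Field_nonempty] .

lemma ksucc_greater: "i \<in> Field k \<Longrightarrow> (i, ksucc k i) \<in> k \<and> i \<noteq> ksucc k i"
  using k.ksucc_in_aboveS[OF no_max[of i]] unfolding aboveS_def by auto

lemma ksucc_in_Field: "i \<in> Field k \<Longrightarrow> ksucc k i \<in> Field k"
  using ksucc_greater by (blast intro: FieldI2)

lemma St_mono: "(i, j) \<in> k \<Longrightarrow> St i \<subseteq> St j"
proof (induction j arbitrary: i rule: k.well_order_induct)
  case (1 j)
  have "j \<in> Field k"
    using "1.prems" by (rule FieldI2)
  then show ?case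
  proof (cases rule: ordinal_cases)
    case zero
    then show ?thesis
      using "1.prems" k.kzero_least[OF FieldI1[OF "1.prems"]] k.ANTISYM unfolding antisym_def by blast
  next
    case (succ i')
    show ?thesis
    proof (cases "i = j")
      case False
      then have "(i, i') \<in> k"
        using k.below_ksucc succ "1.prems" by blast
      moreover have "i' \<noteq> j \<and> (i', j) \<in> k"
        using ksucc_greater[OF succ(1)] succ(2) by blast
      ultimately show ?thesis
        using "1.IH" St_ksucc[OF succ(1)] succ(2) by blast
    qed simp
  next
    case limit
    then show ?thesis
      using "1.prems" St_limit[OF limit] unfolding underS_def by (cases "i = j") auto
  qed
qed

definition stage :: "'x \<Rightarrow> 'k" where
  "stage a = k.minim {i \<in> Field k. a \<in> St i}"

lemma stage: "a \<in> I \<Longrightarrow> stage a \<in> Field k \<and> a \<in> St (stage a)"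
  using k.minim_in[of "{i \<in> Field k. a \<in> St i}"] I_eq unfolding stage_def by blast

lemma mem_St_iff_stage: "a \<in> I \<Longrightarrow> j \<in> Field k \<Longrightarrow> a \<in> St j \<longleftrightarrow> (stage a, j) \<in> k"
  using stage St_mono k.minim_least[of "{i \<in> Field k. a \<in> St i}"] unfolding stage_def by blast

lemma nu_in_St_ksucc: "i \<in> Field k \<Longrightarrow> \<nu> \<in> St i \<Longrightarrow> nu i \<nu> \<in> St (ksucc k i)"
  using St_ksucc by blast

lemma nu_in_later_St:
  assumes "i \<in> Field k" "\<nu> \<in> St i" "(i, j) \<in> k" "i \<noteq> j"
  shows "nu i \<nu> \<in> St j"
proof -
  have "(ksucc k i, j) \<in> k"
    using assms by (intro k.ksucc_least) (simp add: aboveS_def)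
  then show ?thesis
    using St_mono nu_in_St_ksucc assms(1,2) by blast
qed

lemma nu_in_I: "i \<in> Field k \<Longrightarrow> \<nu> \<in> St i \<Longrightarrow> nu i \<nu> \<in> I"
  using nu_in_St_ksucc St_subset_I ksucc_in_Field by blast

lemma nu_decomp:
  assumes "a \<in> I" "i \<in> Field k" "a \<notin> St i"
  shows "\<exists>j \<mu>. j \<in> Field k \<and> \<mu> \<in> St j \<and> (i, j) \<in> k \<and> a = nu j \<mu>"
proof -
  define s where "s = stage a"
  have s: "s \<in> Field k" "a \<in> St s" "(i, s) \<in> k" "i \<noteq> s"
    using stage[OF assms(1)] mem_St_iff_stage[OF assms(1,2)] assms(3) k.TOTALS assms(2)
    unfolding s_def by auto
  from s(1) show ?thesis
  proof (cases rule: ordinal_cases)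
    case zero
    then show ?thesis
      using s(3,4) k.kzero_least[OF assms(2)] k.ANTISYM unfolding antisym_def by blast
  next
    case (succ j)
    have "a \<notin> St j"
    proof
      assume "a \<in> St j"
      then have "(ksucc k j, j) \<in> k"
        using mem_St_iff_stage[OF assms(1) succ(1)] succ(2) unfolding s_def by simp
      then show False
        using ksucc_greater[OF succ(1)] k.ANTISYM unfolding antisym_def by blast
    qed
    moreover have "(i, j) \<in> k"
      using k.below_ksucc[OF succ(1)] s(3,4) succ(2) by blast
    ultimately show ?thesis
      using s(2) St_ksucc[OF succ(1)] succ by blast
  next
    case limit
    then obtain i' where "i' \<in> underS k s" "a \<in> St i'"
      using St_limit s(2) by blast
    then show ?thesis
      using mem_St_iff_stage[OF assms(1)] k.ANTISYM unfolding s_def underS_def antisym_def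
      by (blast dest: FieldI1)
  qed
qed

lemma nu_eq_nu_iff:
  assumes "i \<in> Field k" "j \<in> Field k" "\<nu> \<in> St i" "\<mu> \<in> St j"
  shows "nu i \<nu> = nu j \<mu> \<longleftrightarrow> i = j \<and> \<nu> = \<mu>"
proof -
  have "nu i \<nu> \<noteq> nu j \<mu>" if "i \<in> Field k" "\<nu> \<in> St i" "\<mu> \<in> St j" "(i, j) \<in> k" "i \<noteq> j"
    for i j \<nu> \<mu>
    using nu_in_later_St[OF that(1,2,4,5)] nu_notin_St[OF FieldI2[OF that(4)] that(3)] by metis
  then have "nu i \<nu> = nu j \<mu> \<Longrightarrow> i = j"
    using assms k.TOTALS by metis
  then show ?thesis
    using nu_inj_on[OF assms(1)] assms(3,4) unfolding inj_on_def by blast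
qed

lemma children_increasing:
  assumes "i \<in> Field k" "x \<in> St i" "(i, j) \<in> k" "i \<noteq> j"
  shows "(nu i x, nu j x) \<in> L"
proof -
  have j: "j \<in> Field k" "x \<in> St j"
    using assms St_mono by (auto intro: FieldI2)
  have "nu i x \<noteq> x"
    using nu_notin_St assms(1,2) by metis
  then show ?thesis
    using less_nu_iff[OF j nu_in_later_St[OF assms]] nu_less[OF assms(1,2)] by blast
qed

lemma parent_in_St:
  assumes "i \<in> Field k" "\<nu> \<in> St i" "j \<in> Field k" "nu i \<nu> \<in> St j"
  shows "\<nu> \<in> St j"
proof -
  have "(j, i) \<notin> k \<or> i = j"
    using St_mono nu_notin_St assms by blast
  then have "(i, j) \<in> k"
    using k.TOTALS k.REFL assms(1,3) unfolding refl_on_def by blast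
  then show ?thesis
    using St_mono assms(2) by blast
qed

definition child :: "'x rel" where
  "child = {(\<nu>, nu i \<nu>) | i \<nu>. i \<in> Field k \<and> \<nu> \<in> St i}"

lemma childI: "i \<in> Field k \<Longrightarrow> \<nu> \<in> St i \<Longrightarrow> (\<nu>, nu i \<nu>) \<in> child"
  unfolding child_def by blast

lemma childE:
  assumes "(\<nu>, c) \<in> child"
  obtains i where "i \<in> Field k" "\<nu> \<in> St i" "c = nu i \<nu>"
  using assms unfolding child_def by blast

lemma child_in_I: "(\<nu>, c) \<in> child \<Longrightarrow> \<nu> \<in> I \<and> c \<in> I"
  by (elim childE) (use St_subset_I nu_in_I in blast)

lemma descendant_in_I_iff: "(x, z) \<in> child\<^sup>* \<Longrightarrow> x \<in> I \<longleftrightarrow> z \<in> I"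
  by (induction rule: rtrancl_induct) (auto dest: child_in_I)

lemma wf_child: "wf child"
proof (rule wf_subset[OF wf_inv_image[OF k.WF, of stage]])
  show "child \<subseteq> inv_image (k - Id) stage"
  proof
    fix p assume "p \<in> child"
    then obtain i \<nu> where i: "i \<in> Field k" "\<nu> \<in> St i" and p: "p = (\<nu>, nu i \<nu>)"
      unfolding child_def by blast
    have "(stage \<nu>, i) \<in> k"
      using mem_St_iff_stage i St_subset_I by blast
    moreover have "(i, stage (nu i \<nu>)) \<in> k" "stage (nu i \<nu>) \<noteq> i"
      using mem_St_iff_stage[OF nu_in_I[OF i] i(1)] nu_notin_St[OF i] stage[OF nu_in_I[OF i]]
        k.TOTALS i(1) by auto
    ultimately show "p \<in> inv_image (k - Id) stage"
      using k.TRANS k.ANTISYM unfolding p trans_def antisym_def by auto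
  qed
qed

lemma parent_unique: "(\<nu>, a) \<in> child \<Longrightarrow> (\<mu>, a) \<in> child \<Longrightarrow> \<nu> = \<mu>"
  by (elim childE) (use nu_eq_nu_iff in metis)

lemma root_no_parent: "r \<in> St (kzero k) \<Longrightarrow> (\<nu>, r) \<notin> child"
  using St_mono[OF k.kzero_least] nu_notin_St by (blast elim: childE)

lemma parent_exists:
  assumes "a \<in> I" "a \<notin> St (kzero k)"
  obtains \<nu> where "(\<nu>, a) \<in> child"
  using nu_decomp[OF assms(1) kzero_in_Field] assms(2) childI that by blast

lemma ancestor_in_St: "(x, z) \<in> child\<^sup>* \<Longrightarrow> i \<in> Field k \<Longrightarrow> z \<in> St i \<Longrightarrow> x \<in> St i"
  by (induction rule: rtrancl_induct) (auto elim: childE dest: parent_in_St)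

text \<open>In the step \<open>z = \<nu>^(i+1)\<close>: a point \<open>y\<close> of
  \<open>I^i\<close> compares with \<open>z\<close> as with \<open>\<nu>\<close>; otherwise \<open>y = \<mu>^(j+1)\<close> with \<open>j \<ge> i\<close>, and both \<open>z\<close>
  and \<open>x\<close> compare with \<open>y\<close> as with its parent \<open>\<mu>\<close>.\<close>
lemma descendant_less_iff:
  assumes "x \<in> I" "(x, z) \<in> child\<^sup>*" "y \<in> I" "(x, y) \<notin> child\<^sup>*"
  shows "(z, y) \<in> L \<longleftrightarrow> (x, y) \<in> L"
  using assms(3,4,2)
proof (induction y arbitrary: z rule: wf_induct_rule[OF wf_child])
  case (1 y)
  from "1.prems"(3) show ?case
  proof (induction rule: rtrancl_induct)
    case (step \<nu> z)
    obtain i where i: "i \<in> Field k" "\<nu> \<in> St i" "z = nu i \<nu>"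
      using step.hyps(2) by (rule childE)
    have x_St: "x \<in> St i"
      using ancestor_in_St[OF step.hyps(1) i(1,2)] .
    have yz: "y \<noteq> z" "y \<noteq> \<nu>"
      using "1.prems"(2) step.hyps by (auto intro: rtrancl_into_rtrancl)
    show ?case
    proof (cases "y \<in> St i")
      case True
      have "(y, z) \<in> L \<longleftrightarrow> (y, \<nu>) \<in> L"
        using less_nu_iff[OF i(1,2) True] yz i(3) by blast
      then show ?thesis
        using L_flip "1.prems"(1) child_in_I step.hyps(2) yz step.IH by metis
    next
      case False
      then obtain j \<mu> where j: "j \<in> Field k" "\<mu> \<in> St j" "(i, j) \<in> k" "y = nu j \<mu>"
        using nu_decomp "1.prems"(1) i(1) by blast
      have \<mu>: "(\<mu>, y) \<in> child" "(x, \<mu>) \<notin> child\<^sup>*" "\<mu> \<in> I"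
        using j childI "1.prems"(2) child_in_I by (blast intro: rtrancl_into_rtrancl)+
      have IH: "(w, \<mu>) \<in> L \<longleftrightarrow> (x, \<mu>) \<in> L" if "(x, w) \<in> child\<^sup>*" for w
        using "1.IH"[OF \<mu>(1,3,2) that] .
      have "(x, y) \<in> L \<longleftrightarrow> (x, \<mu>) \<in> L"
        using less_nu_iff[OF j(1,2)] St_mono[OF j(3)] x_St j(4) \<mu>(2) by blast
      moreover have "(z, y) \<in> L \<longleftrightarrow> (x, \<mu>) \<in> L"
      proof (cases "i = j")
        case True
        then have "(z, y) \<in> L \<longleftrightarrow> (\<nu>, \<mu>) \<in> L"
          using nu_less_nu_iff[OF i(1,2)] j i(3) yz(1) by blast
        then show ?thesis
          using IH step.hyps(1) by blast
      next
        case False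
        have "z \<in> St j" "z \<noteq> \<mu>"
          using nu_in_later_St[OF i(1,2) j(3) False] i(3) \<mu>(2) step.hyps
          by (auto intro: rtrancl_into_rtrancl)
        then have "(z, y) \<in> L \<longleftrightarrow> (z, \<mu>) \<in> L"
          using less_nu_iff[OF j(1,2)] j(4) by blast
        then show ?thesis
          using IH step.hyps by (blast intro: rtrancl_into_rtrancl)
      qed
      ultimately show ?thesis
        by blast
    qed
  qed simp
qed

lemma descendant_greater_iff:
  assumes "x \<in> I" "(x, z) \<in> child\<^sup>*" "y \<in> I" "(x, y) \<notin> child\<^sup>*"
  shows "(y, z) \<in> L \<longleftrightarrow> (y, x) \<in> L"
proof -
  have "z \<in> I" "y \<noteq> z" "y \<noteq> x"
    using assms descendant_in_I_iff by auto
  then show ?thesis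
    using descendant_less_iff[OF assms] L_flip assms(1,3) by metis
qed

lemma sibling_not_descendant:
  assumes "i \<in> Field k" "j \<in> Field k" "x \<in> St i" "x \<in> St j" "i \<noteq> j"
  shows "(nu j x, nu i x) \<notin> child\<^sup>*"
proof
  assume "(nu j x, nu i x) \<in> child\<^sup>*"
  moreover have "nu j x \<noteq> nu i x"
    using nu_eq_nu_iff assms by blast
  ultimately obtain w where "(nu j x, w) \<in> child\<^sup>*" "(w, nu i x) \<in> child"
    by (blast elim: rtranclE)
  then have "(x, x) \<in> child\<^sup>+"
    using parent_unique childI assms by (metis rtrancl_into_trancl2)
  then show False
    using wf_acyclic[OF wf_child] unfolding acyclic_def by blast
qed

lemma sibling_less_descendant_iff:
  assumes "i \<in> Field k" "j \<in> Field k" "x \<in> St i" "x \<in> St j" "i \<noteq> j"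
    and "(nu j x, b) \<in> child\<^sup>*"
  shows "(nu i x, b) \<in> L \<longleftrightarrow> (i, j) \<in> k"
proof -
  have I: "nu i x \<in> I" "nu j x \<in> I"
    using nu_in_I assms by auto
  have "(nu i x, b) \<in> L \<longleftrightarrow> (nu i x, nu j x) \<in> L"
    using descendant_greater_iff[OF I(2) assms(6) I(1) sibling_not_descendant[OF assms(1-5)]] .
  also have "\<dots> \<longleftrightarrow> (i, j) \<in> k"
    using children_increasing[of i x j] children_increasing[of j x i] assms(1-5) k.TOTALS L_asym
    by blast
  finally show ?thesis .
qed

lemma minimal_ancestor_outside:
  assumes "a \<in> I" "a \<notin> A"
  obtains y where "(y, a) \<in> child\<^sup>*" "y \<notin> A" "y \<in> St (kzero k) \<or> (\<exists>x\<in>A. (x, y) \<in> child)"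
proof -
  obtain y where y: "y \<in> {y. (y, a) \<in> child\<^sup>* \<and> y \<notin> A}"
    and min: "\<And>w. (w, y) \<in> child \<Longrightarrow> w \<notin> {y. (y, a) \<in> child\<^sup>* \<and> y \<notin> A}"
    using wfE_min[OF wf_child, of a "{y. (y, a) \<in> child\<^sup>* \<and> y \<notin> A}"] assms(2) by blast
  have "y \<in> I"
    using y descendant_in_I_iff assms(1) by blast
  then have "y \<in> St (kzero k) \<or> (\<exists>x\<in>A. (x, y) \<in> child)"
    using parent_exists min y by (blast intro: converse_rtrancl_into_rtrancl)
  then show thesis
    using that y by blast
qed

definition root :: "'x \<Rightarrow> 'x" where
  "root a = (SOME r. r \<in> St (kzero k) \<and> (r, a) \<in> child\<^sup>*)"

lemma root: "a \<in> I \<Longrightarrow> root a \<in> St (kzero k) \<and> (root a, a) \<in> child\<^sup>*"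
  unfolding root_def by (rule someI_ex) (use minimal_ancestor_outside[of a "{}"] in blast)

lemma ancestor_of_root: "r \<in> St (kzero k) \<Longrightarrow> (x, r) \<in> child\<^sup>* \<Longrightarrow> x = r"
  by (erule rtranclE) (auto dest: root_no_parent)

definition ancestors :: "'x set \<Rightarrow> 'x set" where
  "ancestors B = {x. \<exists>b\<in>B. (x, b) \<in> child\<^sup>*}"

definition upper_cut :: "'x set \<Rightarrow> 'x \<Rightarrow> 'x set" where
  "upper_cut B a = {b\<in>B. (a, b) \<in> L}"

definition child_stages :: "'x set \<Rightarrow> 'x \<Rightarrow> 'k set" where
  "child_stages B x = {j \<in> Field k. x \<in> St j \<and> nu j x \<in> ancestors B}"

lemma upper_cut_descendant:
  assumes "B \<subseteq> I" "y \<in> I" "(y, a) \<in> child\<^sup>*" "y \<notin> ancestors B"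
  shows "upper_cut B a = upper_cut B y"
proof -
  have "(a, b) \<in> L \<longleftrightarrow> (y, b) \<in> L" if "b \<in> B" for b
    using descendant_less_iff[OF assms(2,3)] assms(1,4) that unfolding ancestors_def by blast
  then show ?thesis
    unfolding upper_cut_def by blast
qed

lemma upper_cut_root:
  assumes "B \<subseteq> I" "r \<in> St (kzero k)" "r \<notin> ancestors B"
  shows "upper_cut B r = {b\<in>B. root b \<in> upper_cut (root ` B) r}"
proof -
  have "(r, b) \<in> L \<longleftrightarrow> (r, root b) \<in> L" if "b \<in> B" for b
  proof -
    have b: "root b \<in> St (kzero k)" "(root b, b) \<in> child\<^sup>*"
      using root assms(1) that by blast+
    then have "(root b, r) \<notin> child\<^sup>*"
      using ancestor_of_root assms(2,3) that unfolding ancestors_def by blast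
    then show ?thesis
      using descendant_greater_iff[OF _ b(2)] b(1) assms(2) St_subset_I[OF kzero_in_Field] by blast
  qed
  then show ?thesis
    unfolding upper_cut_def by blast
qed

lemma upper_cut_child:
  assumes "B \<subseteq> I" "i \<in> Field k" "x \<in> St i" "nu i x \<notin> ancestors B"
  shows "upper_cut B (nu i x) = {b\<in>B. if (x, b) \<in> child\<^sup>*
      then b = x \<or> (\<exists>j\<in>{j \<in> child_stages B x. (i, j) \<in> k}. (nu j x, b) \<in> child\<^sup>*)
      else (x, b) \<in> L}"
proof -
  have x: "x \<in> I" "(x, nu i x) \<in> child\<^sup>*"
    using St_subset_I childI assms(2,3) by blast+
  have "(nu i x, b) \<in> L \<longleftrightarrow> (if (x, b) \<in> child\<^sup>*
      then b = x \<or> (\<exists>j\<in>{j \<in> child_stages B x. (i, j) \<in> k}. (nu j x, b) \<in> child\<^sup>*)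
      else (x, b) \<in> L)" if b: "b \<in> B" for b
  proof (cases "(x, b) \<in> child\<^sup>*")
    case False
    then show ?thesis
      using descendant_less_iff[OF x _ False] assms(1) b by auto
  next
    case True
    show ?thesis
    proof (cases "b = x")
      case False
      then obtain c where "(x, c) \<in> child" "(c, b) \<in> child\<^sup>*"
        using True by (blast elim: converse_rtranclE)
      then obtain j where j: "j \<in> child_stages B x" "(nu j x, b) \<in> child\<^sup>*"
        using b unfolding child_stages_def ancestors_def by (blast elim: childE)
      have "(nu i x, b) \<in> L \<longleftrightarrow> (i, j') \<in> k"
        if "j' \<in> child_stages B x" "(nu j' x, b) \<in> child\<^sup>*" for j'
        using sibling_less_descendant_iff[OF assms(2) _ assms(3) _ _ that(2)] assms(4) that(1)
        unfolding child_stages_def by blast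
      then show ?thesis
        using True \<open>b \<noteq> x\<close> j by auto
    qed (use nu_less assms(2,3) in simp)
  qed
  then show ?thesis
    unfolding upper_cut_def by blast
qed

lemma upper_cuts_cover:
  assumes "B \<subseteq> I"
  shows "upper_cut B ` I \<subseteq> upper_cut B ` ancestors B \<union>
    upper_cut B ` (St (kzero k) - ancestors B) \<union>
    upper_cut B ` {y. y \<notin> ancestors B \<and> (\<exists>x\<in>ancestors B. (x, y) \<in> child)}"
proof
  fix c assume "c \<in> upper_cut B ` I"
  then obtain a where a: "a \<in> I" "c = upper_cut B a"
    by blast
  show "c \<in> upper_cut B ` ancestors B \<union> upper_cut B ` (St (kzero k) - ancestors B) \<union>
    upper_cut B ` {y. y \<notin> ancestors B \<and> (\<exists>x\<in>ancestors B. (x, y) \<in> child)}"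
  proof (cases "a \<in> ancestors B")
    case False
    then obtain y where y: "(y, a) \<in> child\<^sup>*" "y \<notin> ancestors B"
      "y \<in> St (kzero k) \<or> (\<exists>x\<in>ancestors B. (x, y) \<in> child)"
      using minimal_ancestor_outside[OF a(1)] by blast
    then have "y \<in> I"
      using descendant_in_I_iff a(1) by blast
    then have "c = upper_cut B y"
      using upper_cut_descendant[OF assms _ y(1,2)] a(2) by blast
    then show ?thesis
      using y by blast
  qed (use a in blast)
qed

end

locale regular_I_construction = small_countable_powers k for k :: "'k rel" +
  fixes L :: "'x rel" and St :: "'k \<Rightarrow> 'x set" and nu :: "'k \<Rightarrow> 'x \<Rightarrow> 'x"
    and emb :: "(nat \<Rightarrow> 'k \<times> rat) \<Rightarrow> 'x" and I :: "'x set"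
  assumes constr: "is_I_construction k L St nu emb I"

sublocale regular_I_construction \<subseteq> I_construction k L St nu emb I
proof
  show "Well_order k"
    using card card_order_on_well_order_on by blast
  show "Field k \<noteq> {}"
    using infinite_Field by auto
  show "aboveS k i \<noteq> {}" if "i \<in> Field k" for i
    using infinite_Card_order_limit[OF card infinite_Field that] unfolding aboveS_def by auto
qed (rule constr)

context regular_I_construction
begin

lemma small_ancestors:
  assumes "|B| <o k"
  shows "|ancestors B| <o k"
proof -
  define parent where "parent a = (THE \<nu>. (\<nu>, a) \<in> child)" for a
  have parent: "parent a = \<nu>" if "(\<nu>, a) \<in> child" for \<nu> a
    unfolding parent_def using that parent_unique by blast
  have "\<exists>n. x = (parent ^^ n) b" if "(x, b) \<in> child\<^sup>*" for x b
    using that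
  proof (induction rule: rtrancl_induct)
    case base
    show ?case
      by (rule exI[of _ 0]) simp
  next
    case (step y z)
    then obtain n where "x = (parent ^^ n) (parent z)"
      using parent by metis
    then have "x = (parent ^^ Suc n) z"
      by (simp only: funpow_Suc_right comp_apply)
    then show ?case ..
  qed
  then have "ancestors B \<subseteq> (\<Union>n. (parent ^^ n) ` B)"
    unfolding ancestors_def by blast
  moreover have "|\<Union>n. (parent ^^ n) ` B| <o k"
    by (rule small_UN[OF nat_small card_of_image_ordLess[OF assms]])
  ultimately show ?thesis
    by (rule card_of_subset_ordLess)
qed

lemma small_St_kzero_cuts:
  assumes "R \<subseteq> St (kzero k)" "|R| <o k"
  shows "|upper_cut R ` St (kzero k)| <o k"
proof -
  define R0 where "R0 = {g \<in> I0_set k. emb g \<in> R}"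
  have "|R0| \<le>o |R|"
    using emb_inj unfolding R0_def card_of_ordLeq[symmetric] by (auto intro: inj_on_subset)
  then have "|(\<lambda>f. {g\<in>R0. I0_less k f g}) ` I0_set k| <o k"
    using small_I0_cuts[of R0] assms(2) ordLeq_ordLess_trans unfolding R0_def by blast
  moreover have "upper_cut R (emb f) = emb ` {g\<in>R0. I0_less k f g}" if "f \<in> I0_set k" for f
    using assms(1) emb_less_iff[OF that] unfolding upper_cut_def R0_def St_kzero by auto
  then have "upper_cut R ` St (kzero k) = (`) emb ` (\<lambda>f. {g\<in>R0. I0_less k f g}) ` I0_set k"
    unfolding St_kzero image_image by (rule image_cong[OF refl])
  ultimately show ?thesis
    by (simp only: card_of_image_ordLess)
qed

lemma small_root_cuts:
  assumes "B \<subseteq> I" "|B| <o k"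
  shows "|upper_cut B ` (St (kzero k) - ancestors B)| <o k"
proof -
  have "upper_cut B ` (St (kzero k) - ancestors B) \<subseteq>
      (\<lambda>C. {b\<in>B. root b \<in> C}) ` upper_cut (root ` B) ` St (kzero k)"
    using upper_cut_root[OF assms(1)] by blast
  moreover have "|upper_cut (root ` B) ` St (kzero k)| <o k"
    by (rule small_St_kzero_cuts) (use root assms card_of_image_ordLess in blast)+
  ultimately show ?thesis
    by (rule card_of_subset_ordLess[OF _ card_of_image_ordLess])
qed

lemma small_child_stages:
  assumes "|B| <o k"
  shows "|child_stages B x| <o k"
proof -
  have "inj_on (\<lambda>j. nu j x) (child_stages B x)"
    using nu_eq_nu_iff unfolding child_stages_def inj_on_def by blast
  moreover have "(\<lambda>j. nu j x) ` child_stages B x \<subseteq> ancestors B"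
    unfolding child_stages_def by blast
  ultimately have "|child_stages B x| \<le>o |ancestors B|"
    unfolding card_of_ordLeq[symmetric] by blast
  then show ?thesis
    using small_ancestors[OF assms] by (rule ordLeq_ordLess_trans)
qed

lemma small_child_cuts:
  assumes "B \<subseteq> I" "|B| <o k"
  shows "|upper_cut B ` {y. y \<notin> ancestors B \<and> (\<exists>x\<in>ancestors B. (x, y) \<in> child)}| <o k"
proof -
  define cut_of where "cut_of = (\<lambda>(x, J). {b\<in>B. if (x, b) \<in> child\<^sup>*
      then b = x \<or> (\<exists>j\<in>J. (nu j x, b) \<in> child\<^sup>*) else (x, b) \<in> L})"
  define D where "D = (SIGMA x:ancestors B. (\<lambda>i. {j \<in> child_stages B x. (i, j) \<in> k}) ` UNIV)"
  have "upper_cut B ` {y. y \<notin> ancestors B \<and> (\<exists>x\<in>ancestors B. (x, y) \<in> child)} \<subseteq> cut_of ` D"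
  proof
    fix c assume "c \<in> upper_cut B ` {y. y \<notin> ancestors B \<and> (\<exists>x\<in>ancestors B. (x, y) \<in> child)}"
    then obtain i x where "x \<in> ancestors B" "i \<in> Field k" "x \<in> St i" "nu i x \<notin> ancestors B"
      and "c = upper_cut B (nu i x)"
      by (blast elim: childE)
    then show "c \<in> cut_of ` D"
      using upper_cut_child[OF assms(1)] unfolding cut_of_def D_def by blast
  qed
  moreover have "|D| <o k"
    unfolding D_def
  proof (rule small_Sigma[OF small_ancestors[OF assms(2)]])
    show "|(\<lambda>i. {j \<in> child_stages B x. (i, j) \<in> k}) ` UNIV| <o k" for x
      by (rule small_upper_segments[OF _ small_child_stages[OF assms(2)]])
        (auto simp: child_stages_def)
  qed
  ultimately show ?thesis
    by (rule card_of_subset_ordLess[OF _ card_of_image_ordLess])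
qed

theorem I_bs_stable: "bs_stable k I L"
  unfolding bs_stable_def
proof (intro allI impI, elim conjE)
  fix B assume B: "B \<subseteq> I" "|B| <o k"
  have "|upper_cut B ` I| <o k"
    using small_Un[OF small_Un[OF card_of_image_ordLess[OF small_ancestors[OF B(2)]]
        small_root_cuts[OF B]] small_child_cuts[OF B]]
    by (rule card_of_subset_ordLess[OF upper_cuts_cover[OF B(1)]])
  then have "|upper_cut B ` (I - B)| <o k"
    by (rule card_of_subset_ordLess[rotated]) blast
  moreover have "|(\<lambda>a. tp_bs L a B) ` (I - B)| \<le>o |upper_cut B ` (I - B)|"
    by (rule card_of_image_factor, rule tp_bs_eq_if_same_upper_cut[OF L_strict_linear B(1)])
      (simp_all add: upper_cut_def)
  ultimately have "|(\<lambda>a. tp_bs L a B) ` B \<union> (\<lambda>a. tp_bs L a B) ` (I - B)| <o k"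
    using small_Un card_of_image_ordLess[OF B(2)] ordLeq_ordLess_trans by blast
  then show "|{tp_bs L a B | a. a \<in> I}| <o k"
    by (rule card_of_subset_ordLess[rotated]) blast
qed

end

theorem mainTheorem15:
  fixes k :: "'k rel" and l :: "'l rel"
    and L :: "'x rel" and St :: "'k \<Rightarrow> 'x set" and nu :: "'k \<Rightarrow> 'x \<Rightarrow> 'x"
    and emb :: "(nat \<Rightarrow> 'k \<times> rat) \<Rightarrow> 'x" and I :: "'x set"
  assumes card: "Card_order k"
    and regular: "regularCard k"
    and uncountable: "ordLess2 natLeq k"
    and kappa_lt_kappa: "\<forall>A. A \<subseteq> Field k \<and> ordLess2 (card_of A) k \<longrightarrow>
                            ordLeq3 (card_of (Func A (Field k))) k"
    and gamma_omega: "\<forall>A. A \<subseteq> Field k \<and> ordLess2 (card_of A) k \<longrightarrow>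
                            ordLess2 (card_of (Func (UNIV :: nat set) A)) k"
    and lambda: "Card_order l" "ordIso2 (cardSuc l) k"
    and constr: "is_I_construction k L St nu emb I"
  shows "bs_stable k I L"
proof -
  interpret regular_I_construction k L St nu emb I
    by unfold_locales (fact card regular uncountable gamma_omega constr)+
  show ?thesis
    by (rule I_bs_stable)
qed

end
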